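(* Let $q$ be a prime power and $n$ a positive integer. Let $g, h\in \mathbb{F}_q[x]$ be relatively prime polynomials such that $g(x)$ divides $x^n-1$ and $x^n-1$ divides $g(x)\cdot h(x)$. Then for every polynomial $f\in \mathbb{F}_{q^n}[x]$, the polynomial $P_{f,g,h}(x)=f(L_g(x))+L_h(x)$ is a permutation polynomial of $\mathbb{F}_{q^n}$ if and only if $L_g(f(x))$ induces a permutation of the set $L_g(\mathbb{F}_{q^n})=\{L_g(c):c\in\mathbb{F}_{q^n}\}$. In particular, if $f(L_g(\mathbb{F}_{q^n}))\subseteq L_g(\mathbb{F}_{q^n})$, then $P_{f,g,h}$ is a permutation polynomial of $\mathbb{F}_{q^n}$ if and only if $f$ induces a permutation of $L_g(\mathbb{F}_{q^n})$.
   Context: For a polynomial $u(x)=\sum_{i=0}^m a_i x^i\in\mathbb{F}_q[x]$, its linearized $q$-associate is $L_u(x)=\sum_{i=0}^m a_i x^{q^i}$. A permutation polynomial of $\mathbb{F}_{q^n}$ is a polynomial inducing a bijection of $\mathbb{F}_{q^n}$. *)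

theory Defs
  imports "HOL-Computational_Algebra.Polynomial"
begin

text \<open>An embedding of the field 'b (playing the role of F_q) into the field 'a
  (playing the role of F_{q^n}): an injective ring homomorphism.\<close>
definition field_embedding :: "('b::field \<Rightarrow> 'a::field) \<Rightarrow> bool" where
  "field_embedding emb \<longleftrightarrow> inj emb \<and> emb 1 = 1 \<and>
     (\<forall>x y. emb (x + y) = emb x + emb y) \<and> (\<forall>x y. emb (x * y) = emb x * emb y)"

text \<open>Linearized q-associate L_u(x) = sum a_i x^(q^i), with q = CARD('b), evaluated in 'a
  via the embedding.\<close>
definition lin_assoc :: "('b::{finite,field} \<Rightarrow> 'a::field) \<Rightarrow> 'b poly \<Rightarrow> 'a \<Rightarrow> 'a" where
  "lin_assoc emb u x = (\<Sum>i\<le>degree u. emb (coeff u i) * x ^ (card (UNIV :: 'b set) ^ i))"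

end

theory Submission
  imports Defs "HOL-Algebra.Sylow" "HOL-Library.Cardinality"
begin

(* Write G = L_g and H = L_h; both are additive on F_{q^n}, q being a power of the
   characteristic. Since u \<mapsto> L_u turns products into compositions and L_{x^n - 1}
   vanishes on F_{q^n}, the divisibility x^n - 1 | g h gives G H = H G = 0, and a Bezout
   relation a g + b h = 1 shows ker G \<inter> ker H = 0; in particular H permutes ker G.
   Let P x = f (G x) + H x, so that G (P x) = G (f (G x)). If G f is injective on the image
   of G, then P x = P y gives G x = G y, hence H x = H y and x = y. Conversely, if
   G f (G x) = G f (G y), then P y - P x lies in ker G = H (ker G), so P (x + w) = P y for
   some w in ker G, and injectivity of P gives G x = G y. For the second claim, G itself
   permutes its image, since that image lies in ker H. *)

lemma coprime_imp_bezout: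
  fixes a b :: "'a::euclidean_ring"
  assumes "coprime a b"
  shows "\<exists>x y. x * a + y * b = 1"
  using assms
proof (induction "euclidean_size b" arbitrary: a b rule: less_induct)
  case less
  show ?case
  proof (cases "b = 0")
    case True
    then obtain u where "1 = a * u"
      using less.prems by (auto elim: dvdE)
    then have "u * a + 0 * b = 1"
      by (simp add: mult.commute)
    then show ?thesis
      by blast
  next
    case False
    have "coprime b (a mod b)"
      using less.prems False by (simp add: ac_simps)
    moreover have "euclidean_size (a mod b) < euclidean_size b"
      using False by (rule mod_size_less)
    ultimately obtain x y where "x * b + y * (a mod b) = 1"
      using less.hyps by blast
    then have "y * a + (x - y * (a div b)) * b = 1"
      by (simp add: algebra_simps minus_div_mult_eq_mod [symmetric])
    then show ?thesis
      by blast
  qed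
qed

lemma (in additive) inj_on_subgroupI:
  assumes "\<And>x y. x \<in> K \<Longrightarrow> y \<in> K \<Longrightarrow> x - y \<in> K"
    and "\<And>x. x \<in> K \<Longrightarrow> f x = 0 \<Longrightarrow> x = 0"
  shows "inj_on f K"
proof (rule inj_onI)
  fix x y
  assume "x \<in> K" "y \<in> K" "f x = f y"
  then have "x - y \<in> K" "f (x - y) = 0"
    using assms(1) by (simp_all add: diff)
  then show "x = y"
    using assms(2) by fastforce
qed

lemma bij_betw_self_if_inj_on:
  assumes "inj_on f A" "f ` A \<subseteq> A" "finite A"
  shows "bij_betw f A A"
  using assms by (simp add: bij_betw_def endo_inj_surj)

locale annihilating_pair =
  G: additive G + H: additive H
  for G H :: "'a::{finite,ab_group_add} \<Rightarrow> 'a" +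
  assumes G_H [simp]: "G (H x) = 0"
    and H_G [simp]: "H (G x) = 0"
    and kernels_disjoint: "G x = 0 \<Longrightarrow> H x = 0 \<Longrightarrow> x = 0"
begin

lemma bij_betw_range: "bij_betw G (range G) (range G)"
proof -
  have "inj_on G (range G)"
    by (rule G.inj_on_subgroupI) (auto simp: kernels_disjoint simp flip: G.diff)
  then show ?thesis
    by (rule bij_betw_self_if_inj_on) auto
qed

lemma H_image_ker_G: "H ` {x. G x = 0} = {x. G x = 0}"
proof -
  have "inj_on H {x. G x = 0}"
    by (rule H.inj_on_subgroupI) (auto simp: G.diff kernels_disjoint)
  then show ?thesis
    by (intro endo_inj_surj) auto
qed

lemma bij_iff_bij_betw_range:
  "bij (\<lambda>x. F (G x) + H x) \<longleftrightarrow> bij_betw (\<lambda>x. G (F x)) (range G) (range G)"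
  (is "bij ?P \<longleftrightarrow> _")
proof
  assume "bij ?P"
  have "inj_on (\<lambda>x. G (F x)) (range G)"
  proof (rule inj_onI, clarify)
    fix x y
    assume eq: "G (F (G x)) = G (F (G y))"
    define R where "R = F (G y) - F (G x) + H y - H x"
    have "G R = 0"
      using eq by (simp add: R_def G.add G.diff)
    then have "R \<in> H ` {x. G x = 0}"
      by (simp add: H_image_ker_G)
    then obtain w where w: "G w = 0" "H w = R"
      by blast
    have "?P (x + w) = ?P y"
      using w by (simp add: R_def G.add H.add)
    then have "x + w = y"
      by (rule injD[OF bij_is_inj[OF \<open>bij ?P\<close>]])
    then show "G x = G y"
      using w(1) G.add[of x w] by simp
  qed
  then show "bij_betw (\<lambda>x. G (F x)) (range G) (range G)"
    by (rule bij_betw_self_if_inj_on) auto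
next
  assume bij_GF: "bij_betw (\<lambda>x. G (F x)) (range G) (range G)"
  have "inj ?P"
  proof (rule injI)
    fix x y
    assume eq: "?P x = ?P y"
    then have "G (?P x) = G (?P y)"
      by (rule arg_cong)
    then have "G (F (G x)) = G (F (G y))"
      by (simp add: G.add)
    then have "G x = G y"
      using bij_GF by (auto simp: bij_betw_def inj_on_def)
    moreover from this have "H x = H y"
      using eq by simp
    ultimately show "x = y"
      using kernels_disjoint[of "x - y"] by (simp add: G.diff H.diff)
  qed
  then show "bij ?P"
    by (simp add: bij_def finite_UNIV_inj_surj)
qed

lemma bij_iff_bij_betw_range_self:
  assumes "F ` range G \<subseteq> range G"
  shows "bij (\<lambda>x. F (G x) + H x) \<longleftrightarrow> bij_betw F (range G) (range G)"
proof -
  have "bij_betw (\<lambda>x. G (F x)) (range G) (range G) \<longleftrightarrow> bij_betw F (range G) (range G)"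
  proof
    assume "bij_betw (\<lambda>x. G (F x)) (range G) (range G)"
    then have "inj_on F (range G)"
      by (auto simp: bij_betw_def inj_on_def)
    then show "bij_betw F (range G) (range G)"
      using assms by (rule bij_betw_self_if_inj_on) simp
  next
    assume "bij_betw F (range G) (range G)"
    then show "bij_betw (\<lambda>x. G (F x)) (range G) (range G)"
      using bij_betw_trans[OF _ bij_betw_range] by (simp add: comp_def)
  qed
  then show ?thesis
    by (simp add: bij_iff_bij_betw_range)
qed

end

lemma power_card_eq_self:
  fixes x :: "'a::{finite,field}"
  shows "x ^ CARD('a) = x"
proof (cases "x = 0")
  case True
  then show ?thesis by simp
next
  case False
  define U where "U = UNIV - {0::'a}"
  have "bij_betw ((*) x) U U"
    by (rule bij_betw_byWitness[of _ "\<lambda>y. y / x"]) (use False in \<open>auto simp: U_def\<close>)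
  then have "(\<Prod>y\<in>U. x * y) = \<Prod>U"
    by (rule prod.reindex_bij_betw)
  then have "x ^ card U * \<Prod>U = 1 * \<Prod>U"
    by (simp add: prod.distrib)
  moreover have "\<Prod>U \<noteq> 0"
    by (simp add: U_def)
  ultimately have "x ^ card U = 1"
    by simp
  moreover have "CARD('a) = Suc (card U)"
    by (simp add: U_def card_Diff_singleton card_gt_0_iff Suc_diff_1)
  ultimately show ?thesis
    by simp
qed

lemma power_card_power_eq_self:
  fixes x :: "'a::{finite,field}"
  shows "x ^ (CARD('a) ^ k) = x"
  by (induction k) (simp_all add: power_mult power_card_eq_self)

lemma prime_CHAR_finite_field: "prime CHAR('a::{finite,field})"
  by (simp add: prime_CHAR_semidom finite_imp_CHAR_pos)

lemma prime_dvd_card_imp_eq_CHAR: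
  assumes r: "prime r" and "r dvd CARD('a::{finite,field})"
  shows "r = CHAR('a)"
proof -
  \<comment> \<open>Cauchy's theorem for the additive group (Sylow for \<open>r\<^sup>1\<close>) yields \<open>x \<noteq> 0\<close> with \<open>r x = 0\<close>.\<close>
  let ?V = "\<lparr>carrier = UNIV, mult = (+), one = 0\<rparr> :: 'a monoid"
  have "group ?V"
    by (rule groupI) (auto simp: add.assoc intro: exI[of _ "- _"])
  obtain m where "order ?V = r ^ 1 * m"
    using assms(2) by (auto simp: order_def)
  then obtain H where H: "subgroup H ?V" "card H = r"
    using sylow_thm[OF r \<open>group ?V\<close>, of 1 m] by (auto simp: order_def)
  have "\<not> H \<subseteq> {0}"
    using card_mono[of "{0}" H] prime_gt_1_nat[OF r] H(2) by auto
  then obtain x where x: "x \<in> H" "x \<noteq> 0"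
    by blast
  have "(\<lambda>y. y + x) ` H = H"
    by (rule endo_inj_surj) (use subgroup.m_closed[OF H(1) _ x(1)] in auto)
  then have "bij_betw (\<lambda>y. y + x) H H"
    by (simp add: bij_betw_def inj_on_def)
  then have "(\<Sum>y\<in>H. y + x) = (\<Sum>y\<in>H. y)"
    by (rule sum.reindex_bij_betw)
  then have "of_nat r * x = 0"
    using H(2) by (simp add: sum.distrib)
  then have "CHAR('a) dvd r"
    using x(2) by (simp add: of_nat_eq_0_iff_char_dvd)
  then show ?thesis
    using r prime_CHAR_finite_field[where 'a='a] by (metis primes_dvd_imp_eq)
qed

lemma card_eq_CHAR_power:
  obtains k where "CARD('a::{finite,field}) = CHAR('a) ^ k"
proof -
  define k where "k = multiplicity CHAR('a) CARD('a)"
  obtain y where y: "CARD('a) = CHAR('a) ^ k * y" "\<not> CHAR('a) dvd y"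
    unfolding k_def
  proof (rule multiplicity_decompose')
    show "CARD('a) \<noteq> 0" by simp
    show "\<not> is_unit CHAR('a)" using prime_CHAR_finite_field[where 'a='a] by simp
  qed
  have "y = 1"
  proof (rule ccontr)
    assume "y \<noteq> 1"
    then obtain r where "prime r" "r dvd y"
      using prime_factor_nat by blast
    moreover from this have "r = CHAR('a)"
      using y(1) by (intro prime_dvd_card_imp_eq_CHAR) (auto intro: dvd_mult_left)
    ultimately show False
      using y(2) by simp
  qed
  with y(1) show ?thesis
    using that by simp
qed

locale finite_field_embedding =
  fixes emb :: "'b::{finite,field} \<Rightarrow> 'a::field"
  assumes field_embedding: "field_embedding emb"
begin

lemma emb_add: "emb (x + y) = emb x + emb y"
  and emb_mult: "emb (x * y) = emb x * emb y"
  and emb_1 [simp]: "emb 1 = 1"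
  and inj_emb: "inj emb"
  using field_embedding by (simp_all add: field_embedding_def)

lemma emb_0 [simp]: "emb 0 = 0"
  using emb_add[of 0 0] by (metis add_0 add_cancel_right_right)

lemma emb_power: "emb (x ^ k) = emb x ^ k"
  by (induction k) (simp_all add: emb_mult)

lemma emb_of_nat: "emb (of_nat k) = of_nat k"
  by (induction k) (simp_all add: emb_add)

lemma CHAR_eq: "CHAR('a) = CHAR('b)"
proof (rule CHAR_eqI)
  have "of_nat k = (0 :: 'a) \<longleftrightarrow> of_nat k = (0 :: 'b)" for k
    using inj_emb by (metis emb_0 emb_of_nat injD)
  then show "of_nat CHAR('b) = (0 :: 'a)" "\<And>k. of_nat k = (0 :: 'a) \<Longrightarrow> CHAR('b) dvd k"
    by (simp_all add: of_nat_eq_0_iff_char_dvd)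
qed

lemma emb_power_card_power: "emb c ^ (CARD('b) ^ i) = emb c"
  by (simp add: power_card_power_eq_self flip: emb_power)

lemma CARD_power_eq_CHAR_power: obtains k where "CARD('b) ^ i = CHAR('a) ^ k"
proof -
  obtain k where "CARD('b) = CHAR('a) ^ k"
    using card_eq_CHAR_power[where 'a='b] by (auto simp: CHAR_eq)
  then show ?thesis
    using that[of "k * i"] by (simp add: power_mult)
qed

lemma frobenius_add: "(x + y :: 'a) ^ (CARD('b) ^ i) = x ^ (CARD('b) ^ i) + y ^ (CARD('b) ^ i)"
proof -
  obtain k where "CARD('b) ^ i = CHAR('a) ^ k" by (rule CARD_power_eq_CHAR_power)
  then show ?thesis by (intro freshmans_dream') (simp_all add: CHAR_eq prime_CHAR_finite_field)
qed

lemma frobenius_sum: "sum (f :: 'c \<Rightarrow> 'a) A ^ (CARD('b) ^ i) = (\<Sum>k\<in>A. f k ^ (CARD('b) ^ i))"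
proof -
  obtain k where "CARD('b) ^ i = CHAR('a) ^ k" by (rule CARD_power_eq_CHAR_power)
  then show ?thesis by (intro freshmans_dream_sum') (simp_all add: CHAR_eq prime_CHAR_finite_field)
qed

lemma lin_assoc_sum_atMost:
  assumes "degree u \<le> N"
  shows "lin_assoc emb u x = (\<Sum>i\<le>N. emb (coeff u i) * x ^ (CARD('b) ^ i))"
  unfolding lin_assoc_def
  by (rule sum.mono_neutral_left) (use assms in \<open>auto simp: coeff_eq_0\<close>)

lemma lin_assoc_add_poly: "lin_assoc emb (u + v) x = lin_assoc emb u x + lin_assoc emb v x"
proof -
  define N where "N = max (degree u) (degree v)"
  have "degree (u + v) \<le> N" "degree u \<le> N" "degree v \<le> N"
    by (simp_all add: N_def degree_add_le)
  then show ?thesis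
    by (simp add: lin_assoc_sum_atMost[where N = N] emb_add distrib_right sum.distrib)
qed

lemma lin_assoc_diff_poly: "lin_assoc emb (u - v) x = lin_assoc emb u x - lin_assoc emb v x"
  using lin_assoc_add_poly[of "u - v" v x] by simp

lemma lin_assoc_smult: "lin_assoc emb (smult a u) x = emb a * lin_assoc emb u x"
  by (simp add: lin_assoc_sum_atMost[where N = "degree u"] emb_mult sum_distrib_left mult.assoc)

lemma lin_assoc_pCons: "lin_assoc emb (pCons a u) x = emb a * x + lin_assoc emb u x ^ CARD('b)"
proof -
  have "lin_assoc emb (pCons a u) x = (\<Sum>i\<le>Suc (degree u). emb (coeff (pCons a u) i) * x ^ (CARD('b) ^ i))"
    by (rule lin_assoc_sum_atMost) (rule degree_pCons_le)
  also have "\<dots> = emb a * x + (\<Sum>i\<le>degree u. emb (coeff u i) * x ^ (CARD('b) ^ Suc i))"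
    by (subst sum.atMost_Suc_shift) simp
  also have "(\<Sum>i\<le>degree u. emb (coeff u i) * x ^ (CARD('b) ^ Suc i))
      = (\<Sum>i\<le>degree u. (emb (coeff u i) * x ^ (CARD('b) ^ i)) ^ CARD('b))"
    using emb_power_card_power[of _ 1]
    by (simp add: power_mult_distrib mult.commute flip: power_mult)
  also have "\<dots> = lin_assoc emb u x ^ CARD('b)"
    unfolding lin_assoc_def by (rule frobenius_sum[of _ _ 1, simplified, symmetric])
  finally show ?thesis .
qed

lemma lin_assoc_mult: "lin_assoc emb (u * v) x = lin_assoc emb u (lin_assoc emb v x)"
proof (induction u)
  case 0
  then show ?case by (simp add: lin_assoc_def)
next
  case (pCons a u)
  have "pCons a u * v = smult a v + pCons 0 (u * v)"
    by simp
  then show ?case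
    by (simp add: lin_assoc_add_poly lin_assoc_smult lin_assoc_pCons pCons.IH)
qed

lemma lin_assoc_one: "lin_assoc emb 1 x = x"
  by (simp add: lin_assoc_def)

lemma lin_assoc_monom_one: "lin_assoc emb (monom 1 k) x = x ^ (CARD('b) ^ k)"
  by (induction k) (simp_all add: lin_assoc_one monom_Suc lin_assoc_pCons mult.commute flip: power_mult)

lemma additive_lin_assoc: "additive (lin_assoc emb u)"
  by unfold_locales (simp add: lin_assoc_def frobenius_add distrib_left sum.distrib)

lemma coprime_lin_assoc_kernels_disjoint:
  assumes "coprime g h" "lin_assoc emb g x = 0" "lin_assoc emb h x = 0"
  shows "x = 0"
proof -
  obtain a b where "a * g + b * h = 1"
    using coprime_imp_bezout[OF assms(1)] by blast
  then have "x = lin_assoc emb a (lin_assoc emb g x) + lin_assoc emb b (lin_assoc emb h x)"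
    by (metis lin_assoc_add_poly lin_assoc_mult lin_assoc_one)
  then show ?thesis
    using assms(2,3) by (simp add: additive.zero[OF additive_lin_assoc])
qed

end

lemma lin_assoc_eq_0_if_dvd:
  fixes emb :: "'b::{finite,field} \<Rightarrow> 'a::{finite,field}"
  assumes "field_embedding emb" "CARD('a) = CARD('b) ^ n" "(monom 1 n - 1) dvd u"
  shows "lin_assoc emb u x = 0"
proof -
  interpret finite_field_embedding emb
    by unfold_locales (rule assms(1))
  obtain c where "u = (monom 1 n - 1) * c"
    using assms(3) by (elim dvdE)
  then have "lin_assoc emb u x = lin_assoc emb (monom 1 n - 1) (lin_assoc emb c x)"
    by (simp only: lin_assoc_mult)
  also have "\<dots> = 0"
    using power_card_eq_self[of "lin_assoc emb c x"] assms(2)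
    by (simp add: lin_assoc_diff_poly lin_assoc_monom_one lin_assoc_one)
  finally show ?thesis .
qed

theorem proposition2p7:
  fixes emb :: "'b::{finite,field} \<Rightarrow> 'a::{finite,field}"
    and n :: nat and g h :: "'b poly" and f :: "'a poly"
  assumes "n > 0"
    and "field_embedding emb"
    and "card (UNIV :: 'a set) = card (UNIV :: 'b set) ^ n"
    and "coprime g h"
    and "g dvd (monom 1 n - 1)"
    and "(monom 1 n - 1) dvd (g * h)"
  shows "(bij (\<lambda>x. poly f (lin_assoc emb g x) + lin_assoc emb h x) \<longleftrightarrow>
            bij_betw (\<lambda>x. lin_assoc emb g (poly f x)) (range (lin_assoc emb g)) (range (lin_assoc emb g)))
       \<and> (poly f ` range (lin_assoc emb g) \<subseteq> range (lin_assoc emb g) \<longrightarrow>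
            (bij (\<lambda>x. poly f (lin_assoc emb g x) + lin_assoc emb h x) \<longleftrightarrow>
             bij_betw (poly f) (range (lin_assoc emb g)) (range (lin_assoc emb g))))"
proof -
  interpret finite_field_embedding emb
    by unfold_locales (rule assms(2))
  have "lin_assoc emb (g * h) x = 0" "lin_assoc emb (h * g) x = 0" for x
    using lin_assoc_eq_0_if_dvd[OF assms(2,3,6)] by (simp_all add: mult.commute)
  then interpret annihilating_pair "lin_assoc emb g" "lin_assoc emb h"
    by (intro annihilating_pair.intro annihilating_pair_axioms.intro additive_lin_assoc)
      (auto simp: lin_assoc_mult intro: coprime_lin_assoc_kernels_disjoint[OF assms(4)])
  show ?thesis
    using bij_iff_bij_betw_range bij_iff_bij_betw_range_self by blast
qed

end
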